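(* Let $\alpha\in(0,1]$, $\gamma\in(\tfrac12,1]$, $c>0$, and let $(r_n)_{n\ge0}$ satisfy $0\le r_n<1$ and $\lim_{n\to\infty}n^\gamma r_n=c$. Define $l_n=\prod_{k=0}^{n-1}\frac{1}{1-\alpha r_k}$ and $k_n(t)=\lfloor n+n^\gamma t\rfloor$ for $t\ge0$. Then, uniformly over compact subsets of $[0,+\infty)$, \[\lim_{n\to\infty}\frac{l_{k_n(t)}}{l_n}=\begin{cases}e^{c\alpha t}&\text{if }\tfrac12<\gamma<1,\\(1+t)^{c\alpha}&\text{if }\gamma=1\text{ and }2c\alpha>1.\end{cases}\] *)

theory Defs
  imports "HOL-Analysis.Analysis"
begin

end

theory Submission
  imports Defs
begin

(*
  All factors of l are positive, so l (k n t) / l n = exp (S n t) with S n t the sum of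
  -ln (1 - alpha r j) over the block n <= j < n + floor (n^gamma t).  Since -ln (1 - x) = x + O(x^2)
  and j^gamma alpha r j --> alpha c, each summand is alpha c j^-gamma + o(n^-gamma); the block has at
  most n^gamma t terms, so S n t = alpha c * (block sum of j^-gamma) + o(1) uniformly for bounded t.
  For gamma < 1 every term of that block sum is n^-gamma (1 + o(1)), so it tends to t; for gamma = 1
  it is a harmonic sum and differs from ln (1 + t) by O(1/n).
*)

lemma uniform_limitI_bound:
  fixes f :: "'b \<Rightarrow> 'a \<Rightarrow> 'c::metric_space"
  assumes "\<forall>\<^sub>F n in F. \<forall>t\<in>S. dist (f n t) (g t) \<le> \<beta> n" and "(\<beta> \<longlongrightarrow> 0) F"
  shows "uniform_limit S f g F"
proof (rule uniform_limitI)
  fix e :: real assume "0 < e"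
  with assms(2) have "\<forall>\<^sub>F n in F. \<beta> n < e" by (rule order_tendstoD)
  with assms(1) show "\<forall>\<^sub>F n in F. \<forall>t\<in>S. dist (f n t) (g t) < e"
    by eventually_elim (auto intro: le_less_trans)
qed

lemma uniform_limit_compose_continuous:
  fixes f :: "'b \<Rightarrow> 'a \<Rightarrow> 'c::{heine_borel,real_normed_vector}" and \<phi> :: "'c \<Rightarrow> 'd::metric_space"
  assumes lim: "uniform_limit S f g F" and "bounded (g ` S)" and "continuous_on UNIV \<phi>"
  shows "uniform_limit S (\<lambda>n t. \<phi> (f n t)) (\<lambda>t. \<phi> (g t)) F"
proof -
  obtain b where b: "\<And>t. t \<in> S \<Longrightarrow> g t \<in> cball 0 b"
    using \<open>bounded (g ` S)\<close> by (auto simp: bounded_iff)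
  have "uniformly_continuous_on (cball 0 (b + 1)) \<phi>"
    using \<open>continuous_on UNIV \<phi>\<close>
    by (intro compact_uniformly_continuous) (auto intro: continuous_on_subset)
  moreover have "\<forall>\<^sub>F n in F. \<forall>t\<in>S. f n t \<in> cball 0 (b + 1)"
    using uniform_limitD[OF lim zero_less_one]
  proof eventually_elim
    case (elim n)
    show ?case
    proof
      fix t assume "t \<in> S"
      then have "dist 0 (g t) \<le> b" "dist (f n t) (g t) < 1"
        using elim b by auto
      then show "f n t \<in> cball 0 (b + 1)"
        using dist_triangle2[of 0 "f n t" "g t"] by simp
    qed
  qed
  ultimately show ?thesis
    using uniform_limit_compose_uniformly_continuous_on[OF lim] closed_cball by blast
qed

lemma powr_neg_diff_le:
  fixes x y \<gamma> :: real
  assumes "0 \<le> \<gamma>" "\<gamma> \<le> 1" "0 < x" "x \<le> y"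
  shows "x powr -\<gamma> - y powr -\<gamma> \<le> x powr -\<gamma> * (y - x) / x"
proof -
  have "x / y \<le> (x / y) powr \<gamma>"
    using powr_mono'[of \<gamma> 1 "x / y"] assms by simp
  then have "x powr -\<gamma> * (x / y) \<le> x powr -\<gamma> * (x / y) powr \<gamma>"
    by (intro mult_left_mono) auto
  also have "\<dots> = y powr -\<gamma>"
    using assms by (simp add: powr_divide powr_minus divide_simps)
  finally have "x powr -\<gamma> - y powr -\<gamma> \<le> x powr -\<gamma> * ((y - x) / y)"
    using assms by (simp add: divide_simps algebra_simps)
  also have "\<dots> \<le> x powr -\<gamma> * ((y - x) / x)"
    using assms by (intro mult_left_mono divide_left_mono) auto
  finally show ?thesis by simp
qed

lemma abs_ln_diff_le:
  fixes x y :: real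
  assumes "1 \<le> x" "1 \<le> y"
  shows "\<bar>ln x - ln y\<bar> \<le> \<bar>x - y\<bar>"
proof -
  have "ln x - ln y \<le> (x - y) / y" "ln y - ln x \<le> (y - x) / x"
    using assms by (auto intro: ln_diff_le)
  moreover have "(x - y) / y \<le> \<bar>x - y\<bar>" "(y - x) / x \<le> \<bar>x - y\<bar>"
    using assms by (auto simp: pos_divide_le_eq intro: order_trans[OF _ mult_left_mono[of 1]])
  ultimately show ?thesis
    by linarith
qed

lemma tendsto_powr_mult_neg_ln_one_minus:
  fixes u :: "nat \<Rightarrow> real" and \<gamma> a :: real
  assumes "0 < \<gamma>" and lim: "(\<lambda>j. real j powr \<gamma> * u j) \<longlonglongrightarrow> a"
  shows "(\<lambda>j. real j powr \<gamma> * (- ln (1 - u j) - a * real j powr -\<gamma>)) \<longlonglongrightarrow> 0"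
proof -
  have powr_inverse: "real j powr \<gamma> * real j powr -\<gamma> = 1" if "j \<ge> 1" for j
    using that by (simp add: powr_minus)
  have "(\<lambda>j. real j powr -\<gamma>) \<longlonglongrightarrow> 0"
    using \<open>0 < \<gamma>\<close> by (intro tendsto_neg_powr filterlim_real_sequentially) auto
  then have "(\<lambda>j. (real j powr \<gamma> * u j) * real j powr -\<gamma>) \<longlonglongrightarrow> 0"
    using tendsto_mult[OF lim] by fastforce
  then have "u \<longlonglongrightarrow> 0"
    by (rule Lim_transform_eventually)
       (use eventually_ge_at_top[of 1] in \<open>eventually_elim, simp add: powr_inverse\<close>)
  have "(\<lambda>j. 2 * \<bar>real j powr \<gamma> * u j\<bar> * \<bar>u j\<bar>) \<longlonglongrightarrow> 2 * \<bar>a\<bar> * \<bar>0\<bar>"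
    by (intro tendsto_intros lim \<open>u \<longlonglongrightarrow> 0\<close>)
  then have quadratic_bound_lim: "(\<lambda>j. 2 * \<bar>real j powr \<gamma> * u j\<bar> * \<bar>u j\<bar>) \<longlonglongrightarrow> 0"
    by simp
  have "\<forall>\<^sub>F j in sequentially. \<bar>u j\<bar> \<le> 1 / 2"
    using tendstoD[OF \<open>u \<longlonglongrightarrow> 0\<close>, of "1/2"] by (auto elim: eventually_mono)
  then have "\<forall>\<^sub>F j in sequentially.
      norm (real j powr \<gamma> * (- ln (1 - u j) - u j)) \<le> 2 * \<bar>real j powr \<gamma> * u j\<bar> * \<bar>u j\<bar>"
  proof eventually_elim
    case (elim j)
    then have "\<bar>ln (1 + - u j) - - u j\<bar> \<le> 2 * (- u j)\<^sup>2"
      by (intro abs_ln_one_plus_x_minus_x_bound) simp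
    then have "real j powr \<gamma> * \<bar>- ln (1 - u j) - u j\<bar> \<le> real j powr \<gamma> * (2 * (u j)\<^sup>2)"
      by (intro mult_left_mono) auto
    then show ?case
      by (simp add: abs_mult power2_eq_square mult_ac)
  qed
  then have "(\<lambda>j. real j powr \<gamma> * (- ln (1 - u j) - u j)) \<longlonglongrightarrow> 0"
    using quadratic_bound_lim by (rule Lim_null_comparison)
  moreover have "(\<lambda>j. real j powr \<gamma> * u j - a) \<longlonglongrightarrow> 0"
    using lim by (rule LIM_zero)
  ultimately have "(\<lambda>j. real j powr \<gamma> * (- ln (1 - u j) - u j) + (real j powr \<gamma> * u j - a)) \<longlonglongrightarrow> 0"
    using tendsto_add[of _ 0 _ _ 0] by simp
  then show ?thesis
    by (rule Lim_transform_eventually)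
       (use eventually_ge_at_top[of 1] in \<open>eventually_elim, simp add: algebra_simps powr_inverse\<close>)
qed

lemma uniform_limit_block_sum_zero:
  fixes e :: "nat \<Rightarrow> real" and \<gamma> T :: real
  assumes "0 \<le> \<gamma>" and lim: "(\<lambda>j. real j powr \<gamma> * e j) \<longlonglongrightarrow> 0"
  shows "uniform_limit {0..T} (\<lambda>n t. \<Sum>j = n..<n + nat \<lfloor>real n powr \<gamma> * t\<rfloor>. e j) (\<lambda>_. 0)
           sequentially"
proof (rule uniform_limitI)
  fix \<epsilon> :: real assume "0 < \<epsilon>"
  define \<eta> where "\<eta> = \<epsilon> / (\<bar>T\<bar> + 1)"
  have "\<eta> > 0" "\<bar>T\<bar> * \<eta> < \<epsilon>"
    using \<open>0 < \<epsilon>\<close> by (auto simp: \<eta>_def field_simps)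
  have "\<forall>\<^sub>F n in sequentially. \<forall>j\<ge>n. \<bar>real j powr \<gamma> * e j\<bar> < \<eta>"
    using tendstoD[OF lim \<open>\<eta> > 0\<close>] by (simp add: eventually_all_ge_at_top)
  then show "\<forall>\<^sub>F n in sequentially. \<forall>t\<in>{0..T}.
               dist (\<Sum>j = n..<n + nat \<lfloor>real n powr \<gamma> * t\<rfloor>. e j) 0 < \<epsilon>"
    using eventually_ge_at_top[of 1]
  proof eventually_elim
    case (elim n)
    show ?case
    proof
      fix t assume t: "t \<in> {0..T}"
      define m where "m = nat \<lfloor>real n powr \<gamma> * t\<rfloor>"
      have "real m \<le> real n powr \<gamma> * t"
        using t by (simp add: m_def)
      also have "\<dots> \<le> real n powr \<gamma> * \<bar>T\<bar>"
        using t by (intro mult_left_mono) auto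
      finally have m: "real m \<le> real n powr \<gamma> * \<bar>T\<bar>" .
      have bound: "\<bar>e j\<bar> \<le> \<eta> * real n powr -\<gamma>" if "j \<in> {n..<n + m}" for j
      proof -
        have "\<bar>e j\<bar> = \<bar>real j powr \<gamma> * e j\<bar> * real j powr -\<gamma>"
          using that elim by (simp add: abs_mult powr_minus field_simps)
        also have "\<dots> \<le> \<eta> * real n powr -\<gamma>"
        proof (rule mult_mono)
          show "\<bar>real j powr \<gamma> * e j\<bar> \<le> \<eta>"
            using that elim by (simp add: less_imp_le)
          show "real j powr -\<gamma> \<le> real n powr -\<gamma>"
            using that elim \<open>0 \<le> \<gamma>\<close> by (intro powr_mono2') auto
        qed (use \<open>\<eta> > 0\<close> in auto)
        finally show ?thesis .
      qed
      have "\<bar>\<Sum>j = n..<n + m. e j\<bar> \<le> (\<Sum>j = n..<n + m. \<bar>e j\<bar>)"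
        by (rule sum_abs)
      also have "\<dots> \<le> real (card {n..<n + m}) * (\<eta> * real n powr -\<gamma>)"
        by (rule sum_bounded_above) (rule bound)
      also have "\<dots> = real m * (\<eta> * real n powr -\<gamma>)"
        by simp
      also have "\<dots> \<le> real n powr \<gamma> * \<bar>T\<bar> * (\<eta> * real n powr -\<gamma>)"
        using m \<open>\<eta> > 0\<close> by (intro mult_right_mono) auto
      also have "\<dots> = \<bar>T\<bar> * \<eta>"
        using elim by (simp add: powr_minus field_simps)
      finally show "dist (\<Sum>j = n..<n + m. e j) 0 < \<epsilon>"
        using \<open>\<bar>T\<bar> * \<eta> < \<epsilon>\<close> by simp
    qed
  qed
qed

lemma block_sum_powr_neg_approx:
  fixes \<gamma> :: real and n m :: nat
  assumes "0 \<le> \<gamma>" "\<gamma> \<le> 1" "1 \<le> n"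
  shows "\<bar>(\<Sum>j = n..<n + m. real j powr -\<gamma>) - real m * real n powr -\<gamma>\<bar>
           \<le> real m ^ 2 * real n powr -\<gamma> / real n"
proof -
  have bound: "\<bar>real n powr -\<gamma> - real j powr -\<gamma>\<bar> \<le> real n powr -\<gamma> * real m / real n"
    if "j \<in> {n..<n + m}" for j
  proof -
    have "0 \<le> real n powr -\<gamma> - real j powr -\<gamma>"
      using that assms by (auto intro: powr_mono2')
    moreover have "real n powr -\<gamma> - real j powr -\<gamma> \<le> real n powr -\<gamma> * (real j - real n) / real n"
      using that assms by (intro powr_neg_diff_le) auto
    moreover have "real n powr -\<gamma> * (real j - real n) / real n \<le> real n powr -\<gamma> * real m / real n"
      using that by (intro divide_right_mono mult_left_mono) auto
    ultimately show ?thesis by linarith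
  qed
  have "(\<Sum>j = n..<n + m. real j powr -\<gamma>) - real m * real n powr -\<gamma>
          = - (\<Sum>j = n..<n + m. real n powr -\<gamma> - real j powr -\<gamma>)"
    by (simp add: sum_subtractf)
  then have "\<bar>(\<Sum>j = n..<n + m. real j powr -\<gamma>) - real m * real n powr -\<gamma>\<bar>
               \<le> (\<Sum>j = n..<n + m. \<bar>real n powr -\<gamma> - real j powr -\<gamma>\<bar>)"
    using sum_abs by (simp only: abs_minus_cancel)
  also have "\<dots> \<le> real (card {n..<n + m}) * (real n powr -\<gamma> * real m / real n)"
    by (rule sum_bounded_above) (rule bound)
  also have "\<dots> = real m ^ 2 * real n powr -\<gamma> / real n"
    by (simp add: power2_eq_square mult_ac)
  finally show ?thesis .
qed

lemma uniform_limit_block_sum_powr: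
  fixes \<gamma> T :: real
  assumes "0 < \<gamma>" "\<gamma> < 1"
  shows "uniform_limit {0..T} (\<lambda>n t. \<Sum>j = n..<n + nat \<lfloor>real n powr \<gamma> * t\<rfloor>. real j powr -\<gamma>)
           (\<lambda>t. t) sequentially"
proof (rule uniform_limitI_bound)
  have "(\<lambda>n. real n powr (\<gamma> - 1)) \<longlonglongrightarrow> 0" "(\<lambda>n. real n powr -\<gamma>) \<longlonglongrightarrow> 0"
    using assms by (auto intro: tendsto_neg_powr filterlim_real_sequentially)
  from tendsto_add[OF tendsto_mult[OF tendsto_const this(1)] this(2)]
  show "(\<lambda>n. T\<^sup>2 * real n powr (\<gamma> - 1) + real n powr -\<gamma>) \<longlonglongrightarrow> 0"
    by simp
  show "\<forall>\<^sub>F n in sequentially. \<forall>t\<in>{0..T}.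
          dist (\<Sum>j = n..<n + nat \<lfloor>real n powr \<gamma> * t\<rfloor>. real j powr -\<gamma>) t
            \<le> T\<^sup>2 * real n powr (\<gamma> - 1) + real n powr -\<gamma>"
    using eventually_ge_at_top[of 1]
  proof eventually_elim
    case (elim n)
    show ?case
    proof
      fix t assume t: "t \<in> {0..T}"
      define m where "m = nat \<lfloor>real n powr \<gamma> * t\<rfloor>"
      have m: "real m \<le> real n powr \<gamma> * t" "real n powr \<gamma> * t < real m + 1"
        using t by (auto simp: m_def)
      have "real n powr \<gamma> * t \<le> real n powr \<gamma> * T"
        using t by (intro mult_left_mono) auto
      then have "real m \<le> real n powr \<gamma> * T"
        using m(1) by linarith
      then have "real m ^ 2 * real n powr -\<gamma> / real n \<le> (real n powr \<gamma> * T)\<^sup>2 * real n powr -\<gamma> / real n"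
        by (intro divide_right_mono mult_right_mono power_mono) auto
      also have "\<dots> = T\<^sup>2 * real n powr (\<gamma> - 1)"
        using elim by (simp add: power2_eq_square powr_minus powr_diff field_simps)
      finally have "real m ^ 2 * real n powr -\<gamma> / real n \<le> T\<^sup>2 * real n powr (\<gamma> - 1)" .
      moreover have "\<bar>real m * real n powr -\<gamma> - t\<bar> \<le> real n powr -\<gamma>"
      proof -
        have "real m * real n powr -\<gamma> - t = (real m - real n powr \<gamma> * t) * real n powr -\<gamma>"
          using elim by (simp add: powr_minus field_simps)
        moreover have "\<bar>real m - real n powr \<gamma> * t\<bar> \<le> 1"
          using m by linarith
        ultimately show ?thesis
          using mult_right_mono[of _ 1 "real n powr -\<gamma>"] by (simp add: abs_mult)
      qed
      ultimately show "dist (\<Sum>j = n..<n + m. real j powr -\<gamma>) t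
                         \<le> T\<^sup>2 * real n powr (\<gamma> - 1) + real n powr -\<gamma>"
        using block_sum_powr_neg_approx[of \<gamma> n m] assms elim
        by (simp add: dist_real_def)
    qed
  qed
qed

lemma harmonic_block_sum_bounds:
  fixes n m :: nat
  assumes "1 \<le> n"
  shows "ln (real (n + m)) - ln (real n) \<le> (\<Sum>j = n..<n + m. 1 / real j)"
    and "(\<Sum>j = n..<n + m. 1 / real j) \<le> ln (real (n + m)) - ln (real n) + 1 / real n"
proof -
  have telescope: "ln (real (n + m)) - ln (real n) = (\<Sum>j = n..<n + m. ln (real (Suc j)) - ln (real j))"
    by (subst sum_Suc_diff') auto
  have step: "1 / real (Suc j) \<le> ln (real (Suc j)) - ln (real j)"
             "ln (real (Suc j)) - ln (real j) \<le> 1 / real j" if "j \<ge> 1" for j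
  proof -
    have "ln (real j) - ln (real (Suc j)) \<le> (real j - real (Suc j)) / real (Suc j)"
      using that by (intro ln_diff_le) auto
    then show "1 / real (Suc j) \<le> ln (real (Suc j)) - ln (real j)"
      by (simp add: diff_divide_distrib)
    have "ln (real (Suc j)) - ln (real j) \<le> (real (Suc j) - real j) / real j"
      using that by (intro ln_diff_le) auto
    then show "ln (real (Suc j)) - ln (real j) \<le> 1 / real j"
      by simp
  qed
  show "ln (real (n + m)) - ln (real n) \<le> (\<Sum>j = n..<n + m. 1 / real j)"
    unfolding telescope using assms by (intro sum_mono step(2)) auto
  have "(\<Sum>j = n..<n + m. 1 / real j) - (ln (real (n + m)) - ln (real n))
          \<le> (\<Sum>j = n..<n + m. 1 / real j - 1 / real (Suc j))"
    unfolding telescope sum_subtractf[symmetric] using assms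
    by (intro sum_mono diff_left_mono step(1)) auto
  also have "\<dots> = 1 / real n - 1 / real (n + m)"
    using sum_Suc_diff'[of n "n + m" "\<lambda>j. - 1 / real j"] by (simp add: algebra_simps)
  also have "\<dots> \<le> 1 / real n"
    by simp
  finally show "(\<Sum>j = n..<n + m. 1 / real j) \<le> ln (real (n + m)) - ln (real n) + 1 / real n"
    by simp
qed

lemma uniform_limit_harmonic_block_sum:
  fixes T :: real
  shows "uniform_limit {0..T} (\<lambda>n t. \<Sum>j = n..<n + nat \<lfloor>real n * t\<rfloor>. 1 / real j)
           (\<lambda>t. ln (1 + t)) sequentially"
proof (rule uniform_limitI_bound)
  show "(\<lambda>n. 2 / real n) \<longlonglongrightarrow> 0"
    by (rule lim_const_over_n)
  show "\<forall>\<^sub>F n in sequentially. \<forall>t\<in>{0..T}.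
          dist (\<Sum>j = n..<n + nat \<lfloor>real n * t\<rfloor>. 1 / real j) (ln (1 + t)) \<le> 2 / real n"
    using eventually_ge_at_top[of 1]
  proof eventually_elim
    case (elim n)
    show ?case
    proof
      fix t assume t: "t \<in> {0..T}"
      define m where "m = nat \<lfloor>real n * t\<rfloor>"
      have m: "real m \<le> real n * t" "real n * t < real m + 1"
        using t by (auto simp: m_def)
      have "1 + real m / real n = real (n + m) / real n"
        using elim by (simp add: field_simps)
      then have "ln (real (n + m)) - ln (real n) = ln (1 + real m / real n)"
        using elim by (simp add: ln_div)
      moreover have "\<bar>ln (1 + real m / real n) - ln (1 + t)\<bar> \<le> 1 / real n"
      proof -
        have "\<bar>real m - real n * t\<bar> \<le> 1"
          using m by linarith
        moreover have "real m / real n - t = (real m - real n * t) / real n"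
          using elim by (simp add: field_simps)
        ultimately have "\<bar>real m / real n - t\<bar> \<le> 1 / real n"
          using elim by (simp add: abs_div divide_right_mono)
        then show ?thesis
          using abs_ln_diff_le[of "1 + real m / real n" "1 + t"] t by simp
      qed
      ultimately show "dist (\<Sum>j = n..<n + m. 1 / real j) (ln (1 + t)) \<le> 2 / real n"
        using harmonic_block_sum_bounds[OF elim, of m] by (simp add: dist_real_def abs_le_iff)
    qed
  qed
qed

lemma uniform_limit_block_sum_neg_ln_one_minus:
  fixes u :: "nat \<Rightarrow> real" and \<gamma> a T :: real and h :: "real \<Rightarrow> real"
  assumes "0 < \<gamma>" and "(\<lambda>j. real j powr \<gamma> * u j) \<longlonglongrightarrow> a"
    and "uniform_limit {0..T} (\<lambda>n t. \<Sum>j = n..<n + nat \<lfloor>real n powr \<gamma> * t\<rfloor>. real j powr -\<gamma>) h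
           sequentially"
  shows "uniform_limit {0..T} (\<lambda>n t. \<Sum>j = n..<n + nat \<lfloor>real n powr \<gamma> * t\<rfloor>. - ln (1 - u j))
           (\<lambda>t. a * h t) sequentially"
proof -
  have "uniform_limit {0..T}
          (\<lambda>n t. (\<Sum>j = n..<n + nat \<lfloor>real n powr \<gamma> * t\<rfloor>. - ln (1 - u j) - a * real j powr -\<gamma>)
                 + a * (\<Sum>j = n..<n + nat \<lfloor>real n powr \<gamma> * t\<rfloor>. real j powr -\<gamma>))
          (\<lambda>t. 0 + a * h t) sequentially"
    using assms
    by (intro uniform_limit_add uniform_limit_block_sum_zero tendsto_powr_mult_neg_ln_one_minus
              bounded_linear.uniform_limit[OF bounded_linear_mult_right]) auto
  then show ?thesis
    by (simp add: sum_subtractf sum_distrib_left)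
qed

lemma prod_inverse_ratio_eq_exp_sum:
  fixes u :: "nat \<Rightarrow> real"
  assumes "\<And>j. u j < 1"
  shows "(\<Prod>j<n + m. 1 / (1 - u j)) / (\<Prod>j<n. 1 / (1 - u j))
           = exp (\<Sum>j = n..<n + m. - ln (1 - u j))"
proof -
  have "(\<Prod>j<n + m. 1 / (1 - u j)) = (\<Prod>j<n. 1 / (1 - u j)) * (\<Prod>j = n..<n + m. 1 / (1 - u j))"
    by (subst prod.union_disjoint[symmetric]) (auto intro!: prod.cong)
  moreover have "(\<Prod>j<n. 1 / (1 - u j)) \<noteq> 0"
    using assms by (simp add: less_le)
  moreover have "(\<Prod>j = n..<n + m. 1 / (1 - u j)) = (\<Prod>j = n..<n + m. exp (- ln (1 - u j)))"
  proof (rule prod.cong)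
    show "1 / (1 - u j) = exp (- ln (1 - u j))" for j
      using assms[of j] by (simp add: exp_minus inverse_eq_divide)
  qed simp
  ultimately show ?thesis
    by (simp add: exp_sum)
qed

lemma uniform_limit_prod_ratio:
  fixes u :: "nat \<Rightarrow> real" and \<gamma> a :: real and h :: "real \<Rightarrow> real" and K :: "real set"
  assumes "0 < \<gamma>" and "\<And>j. u j < 1" and "(\<lambda>j. real j powr \<gamma> * u j) \<longlonglongrightarrow> a"
    and "\<And>T. uniform_limit {0..T}
               (\<lambda>n t. \<Sum>j = n..<n + nat \<lfloor>real n powr \<gamma> * t\<rfloor>. real j powr -\<gamma>) h sequentially"
    and "continuous_on {0..} h" and "compact K" "K \<subseteq> {0..}"
  shows "uniform_limit K
           (\<lambda>n t. (\<Prod>j<nat \<lfloor>real n + real n powr \<gamma> * t\<rfloor>. 1 / (1 - u j)) / (\<Prod>j<n. 1 / (1 - u j)))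
           (\<lambda>t. exp (a * h t)) sequentially"
proof -
  obtain T where "K \<subseteq> {0..T}"
    using compact_imp_bounded[OF \<open>compact K\<close>] \<open>K \<subseteq> {0..}\<close> by (force simp: bounded_iff)
  have "continuous_on {0..T} (\<lambda>t. a * h t)"
    using continuous_on_subset[OF \<open>continuous_on {0..} h\<close>] by (intro continuous_on_mult_left) auto
  then have "bounded ((\<lambda>t. a * h t) ` {0..T})"
    by (intro compact_imp_bounded compact_continuous_image compact_Icc)
  moreover have "continuous_on UNIV (exp :: real \<Rightarrow> real)"
    by (intro continuous_intros)
  ultimately have exp_limit: "uniform_limit {0..T}
      (\<lambda>n t. exp (\<Sum>j = n..<n + nat \<lfloor>real n powr \<gamma> * t\<rfloor>. - ln (1 - u j)))
      (\<lambda>t. exp (a * h t)) sequentially"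
    using uniform_limit_compose_continuous[OF uniform_limit_block_sum_neg_ln_one_minus[OF assms(1,3,4)]]
    by blast
  have "(\<Prod>j<nat \<lfloor>real n + real n powr \<gamma> * t\<rfloor>. 1 / (1 - u j)) / (\<Prod>j<n. 1 / (1 - u j))
          = exp (\<Sum>j = n..<n + nat \<lfloor>real n powr \<gamma> * t\<rfloor>. - ln (1 - u j))"
    if "t \<in> {0..T}" for n t
  proof -
    have "nat \<lfloor>real n + real n powr \<gamma> * t\<rfloor> = n + nat \<lfloor>real n powr \<gamma> * t\<rfloor>"
      using that by (simp add: nat_add_distrib add.commute[of "real n"])
    then show ?thesis
      using prod_inverse_ratio_eq_exp_sum[OF \<open>\<And>j. u j < 1\<close>] by simp
  qed
  then have "uniform_limit {0..T}
      (\<lambda>n t. (\<Prod>j<nat \<lfloor>real n + real n powr \<gamma> * t\<rfloor>. 1 / (1 - u j)) / (\<Prod>j<n. 1 / (1 - u j)))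
      (\<lambda>t. exp (a * h t)) sequentially"
    using exp_limit by (subst uniform_limit_cong') auto
  then show ?thesis
    using \<open>K \<subseteq> {0..T}\<close> by (rule uniform_limit_on_subset)
qed

corollary uniform_limit_prod_ratio_exp:
  fixes u :: "nat \<Rightarrow> real" and \<gamma> a :: real and K :: "real set"
  assumes "0 < \<gamma>" "\<gamma> < 1" and "\<And>j. u j < 1" and "(\<lambda>j. real j powr \<gamma> * u j) \<longlonglongrightarrow> a"
    and "compact K" "K \<subseteq> {0..}"
  shows "uniform_limit K
           (\<lambda>n t. (\<Prod>j<nat \<lfloor>real n + real n powr \<gamma> * t\<rfloor>. 1 / (1 - u j)) / (\<Prod>j<n. 1 / (1 - u j)))
           (\<lambda>t. exp (a * t)) sequentially"
  using assms by (intro uniform_limit_prod_ratio uniform_limit_block_sum_powr continuous_on_id)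

corollary uniform_limit_prod_ratio_powr:
  fixes u :: "nat \<Rightarrow> real" and a :: real and K :: "real set"
  assumes "\<And>j. u j < 1" and "(\<lambda>j. real j * u j) \<longlonglongrightarrow> a" and "compact K" "K \<subseteq> {0..}"
  shows "uniform_limit K
           (\<lambda>n t. (\<Prod>j<nat \<lfloor>real n + real n * t\<rfloor>. 1 / (1 - u j)) / (\<Prod>j<n. 1 / (1 - u j)))
           (\<lambda>t. (1 + t) powr a) sequentially"
proof -
  have powr_one_nat: "real n powr 1 = real n" for n
    by simp
  have "uniform_limit K
          (\<lambda>n t. (\<Prod>j<nat \<lfloor>real n + real n powr 1 * t\<rfloor>. 1 / (1 - u j)) / (\<Prod>j<n. 1 / (1 - u j)))
          (\<lambda>t. exp (a * ln (1 + t))) sequentially"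
  proof (rule uniform_limit_prod_ratio)
    show "uniform_limit {0..T}
            (\<lambda>n t. \<Sum>j = n..<n + nat \<lfloor>real n powr 1 * t\<rfloor>. real j powr -1) (\<lambda>t. ln (1 + t))
            sequentially" for T
      using uniform_limit_harmonic_block_sum[of T] by (simp add: powr_minus_divide)
    show "continuous_on {0..} (\<lambda>t::real. ln (1 + t))"
      by (intro continuous_intros) auto
  qed (use assms in \<open>simp_all add: powr_one_nat\<close>)
  moreover have "exp (a * ln (1 + t)) = (1 + t) powr a" if "t \<in> K" for t
    using that \<open>K \<subseteq> {0..}\<close> by (auto simp: powr_def mult.commute)
  ultimately show ?thesis
    by (subst (asm) uniform_limit_cong') (auto simp: powr_one_nat)
qed

theorem lemma6p1:
  fixes \<alpha> \<gamma> c :: real and r :: "nat \<Rightarrow> real"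
    and l :: "nat \<Rightarrow> real" and k :: "nat \<Rightarrow> real \<Rightarrow> nat"
  assumes "0 < \<alpha>" "\<alpha> \<le> 1" "1/2 < \<gamma>" "\<gamma> \<le> 1" "0 < c"
    and "\<And>n. 0 \<le> r n" "\<And>n. r n < 1"
    and "(\<lambda>n. real n powr \<gamma> * r n) \<longlonglongrightarrow> c"
    and l_def: "\<And>n. l n = (\<Prod>j<n. 1 / (1 - \<alpha> * r j))"
    and k_def: "\<And>n t. k n t = nat \<lfloor>real n + real n powr \<gamma> * t\<rfloor>"
  shows "(\<gamma> < 1 \<longrightarrow> (\<forall>K. compact K \<and> K \<subseteq> {0..} \<longrightarrow>
            uniform_limit K (\<lambda>n t. l (k n t) / l n) (\<lambda>t. exp (c * \<alpha> * t)) sequentially))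
       \<and> (\<gamma> = 1 \<and> 2 * c * \<alpha> > 1 \<longrightarrow> (\<forall>K. compact K \<and> K \<subseteq> {0..} \<longrightarrow>
            uniform_limit K (\<lambda>n t. l (k n t) / l n) (\<lambda>t. (1 + t) powr (c * \<alpha>)) sequentially))"
proof -
  have u: "\<alpha> * r j < 1" for j
    using mult_right_mono[OF \<open>\<alpha> \<le> 1\<close> assms(6)[of j]] assms(7)[of j] by simp
  have lim: "(\<lambda>j. real j powr \<gamma> * (\<alpha> * r j)) \<longlonglongrightarrow> c * \<alpha>"
    using tendsto_mult_right[OF assms(8), of \<alpha>] by (simp add: mult_ac)
  have ratio: "(\<lambda>n t. l (k n t) / l n) = (\<lambda>n t.
      (\<Prod>j<nat \<lfloor>real n + real n powr \<gamma> * t\<rfloor>. 1 / (1 - \<alpha> * r j)) / (\<Prod>j<n. 1 / (1 - \<alpha> * r j)))"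
    by (simp add: l_def k_def)
  show ?thesis
  proof (intro conjI impI allI; elim conjE)
    fix K :: "real set" assume "\<gamma> < 1" "compact K" "K \<subseteq> {0..}"
    then show "uniform_limit K (\<lambda>n t. l (k n t) / l n) (\<lambda>t. exp (c * \<alpha> * t)) sequentially"
      unfolding ratio using assms(3) by (intro uniform_limit_prod_ratio_exp u lim) auto
  next
    fix K :: "real set" assume "\<gamma> = 1" "compact K" "K \<subseteq> {0..}"
    then have powr_\<gamma>: "real n powr \<gamma> = real n" for n
      by simp
    show "uniform_limit K (\<lambda>n t. l (k n t) / l n) (\<lambda>t. (1 + t) powr (c * \<alpha>)) sequentially"
      unfolding ratio powr_\<gamma> using lim[unfolded powr_\<gamma>] \<open>compact K\<close> \<open>K \<subseteq> {0..}\<close>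
      by (rule uniform_limit_prod_ratio_powr[OF u])
  qed
qed

end
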